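(* Let $T>0$. The following are equivalent: (i) for every $(u_0,v_0)\in(H^2_{per})^*\times(H^1_{per})^*$ with $\langle v_0,1\rangle_{(H^1_{per})^*,H^1_{per}}=0$ there exist $f\in L^2(0,2\pi)$ and $g\in L^2(0,T)$ such that the solution of $u_t+u_{xxxx}+u_{xxx}+u_{xx}-v_x=f(x)g(t)$, $v_t-v_{xx}+v_x-u_x=0$ on $(0,T)\times(0,2\pi)$, with $2\pi$-periodic boundary conditions on $u,u_x,u_{xx},u_{xxx},v,v_x$ and $u(0)=u_0$, $v(0)=v_0$, satisfies $u(T,\cdot)=v(T,\cdot)=0$; (ii) for every $(u_0,v_0)\in(H^2_{per})^*\times(H^1_{per})^*$ with $\langle v_0,1\rangle_{(H^1_{per})^*,H^1_{per}}=0$ there exist $f\in L^2(0,2\pi)$ and $g\in L^2(0,T)$ such that \[ f_k\int_{-T/2}^{T/2}e^{-\overline{\lambda_k^\pm}t}g\!\left(t+\tfrac T2\right)dt=-e^{\overline{\lambda_k^\pm}\frac T2}\gamma_k^\pm\ \ (k\in\mathbb Z\setminus\{0\}),\qquad f_0\int_{-T/2}^{T/2}g\!\left(t+\tfrac T2\right)dt=-\gamma_0, \] where $f_k=\int_0^{2\pi}f(x)e^{-ikx}dx$, $f_0=\int_0^{2\pi}f(x)dx$, $\gamma_k^\pm=\langle u_0,e^{ikx}\rangle_{(H^2_{per})^*,H^2_{per}}+\overline{\theta_k^\pm}\langle v_0,e^{ikx}\rangle_{(H^1_{per})^*,H^1_{per}}$, and $\gamma_0=\langle u_0,1\rangle_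{(H^2_{per})^*,H^2_{per}}$.
   Context: $H^s_{per}(0,2\pi)$: functions $\sum_k\phi_ke^{-ikx}\in L^2(0,2\pi)$ with $\sum_k(1+|k|^2)^s|\phi_k|^2<\infty$; $(H^s_{per})^*$ its dual w.r.t. the pivot $L^2(0,2\pi)$. For $k\in\mathbb Z\setminus\{0\}$, $\lambda_k^\pm=\frac12\big[-(k^4+ik^3-ik)\pm\sqrt{(k^4+ik^3-ik)^2-4(k^6+ik^3+k^2)}\big]$, labelled so that $\lambda_k^+=-k^2+ik+O(|k|^{-1})$ and $\lambda_k^-=-k^4-ik^3+k^2+O(|k|^{-1})$ as $|k|\to\infty$; these are nonzero. $\theta_k^\pm=\eta_k^\pm/\lambda_k^\pm$ with $\eta_k^\pm=-ik^5-(1+\lambda_k^\pm)ik+k^2-\lambda_k^\pm$. The control system is well posed in $C([0,T];(H^2_{per})^*\times(H^1_{per})^* )$. *)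

theory Defs
  imports "HOL-Analysis.Analysis"
begin

text \<open>Elements of the dual spaces (H^s_per)* are represented by their
  coefficient sequences a k = <u, e^{ikx}> (duality pairing extending the L^2(0,2pi)
  inner product, conjugate-linear in the second slot). This identifies (H^s_per)*
  isometrically (up to constants) with a weighted l^2 space.\<close>

definition dual_Hper :: "real \<Rightarrow> (int \<Rightarrow> complex) \<Rightarrow> bool" where
  "dual_Hper s a \<longleftrightarrow>
     (\<lambda>k::int. (1 + (real_of_int k)^2) powr (-s) * (cmod (a k))^2) summable_on UNIV"

definition L2_on :: "real set \<Rightarrow> (real \<Rightarrow> complex) \<Rightarrow> bool" where
  "L2_on A h \<longleftrightarrow> set_borel_measurable lborel A h \<and>
                   set_integrable lborel A (\<lambda>x. (cmod (h x))^2)"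

definition fcoeff :: "(real \<Rightarrow> complex) \<Rightarrow> int \<Rightarrow> complex" where
  "fcoeff h k = (LINT x:{0..2*pi}|lborel. h x * exp (- (\<i> * of_int k * of_real x)))"

text \<open>Action of d/dx on the k-th mode in the weak formulation:
  <w_x, e^{ikx}> = - <w, (e^{ikx})_x> = (i k) <w, e^{ikx}>.\<close>
definition dsym :: "int \<Rightarrow> complex" where
  "dsym k = \<i> * of_int k"

text \<open>Weak solution on [0,T] of
  u_t + u_xxxx + u_xxx + u_xx - v_x = f(x) g(t),  v_t - v_xx + v_x - u_x = 0,
  periodic, u(0)=u0, v(0)=v0, given through the coefficients U t k = <u(t), e^{ikx}>,
  V t k = <v(t), e^{ikx}> (tested against every e^{ikx}, integrated in time);
  a, b are the coefficient sequences of u0, v0.\<close>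
definition is_solution ::
  "real \<Rightarrow> (real \<Rightarrow> complex) \<Rightarrow> (real \<Rightarrow> complex) \<Rightarrow> (int \<Rightarrow> complex) \<Rightarrow> (int \<Rightarrow> complex)
   \<Rightarrow> (real \<Rightarrow> int \<Rightarrow> complex) \<Rightarrow> (real \<Rightarrow> int \<Rightarrow> complex) \<Rightarrow> bool" where
  "is_solution T f g a b U V \<longleftrightarrow>
     (\<forall>k. continuous_on {0..T} (\<lambda>t. U t k) \<and> continuous_on {0..T} (\<lambda>t. V t k)) \<and>
     (\<forall>k. \<forall>t\<in>{0..T}.
        set_integrable lborel {0..t}
          (\<lambda>s. (- ((dsym k)^4) - (dsym k)^3 - (dsym k)^2) * U s k + dsym k * V s k
               + fcoeff f k * g s) \<and>
        set_integrable lborel {0..t}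
          (\<lambda>s. ((dsym k)^2 - dsym k) * V s k + dsym k * U s k) \<and>
        U t k = a k + (LINT s:{0..t}|lborel.
          (- ((dsym k)^4) - (dsym k)^3 - (dsym k)^2) * U s k + dsym k * V s k
               + fcoeff f k * g s) \<and>
        V t k = b k + (LINT s:{0..t}|lborel.
          ((dsym k)^2 - dsym k) * V s k + dsym k * U s k))"

text \<open>The two eigenvalues lambda_k^+ (sg = True) and lambda_k^- (sg = False).
  Only the unordered pair matters for the statement.\<close>
definition lam :: "bool \<Rightarrow> int \<Rightarrow> complex" where
  "lam sg k = (let K = (of_int k :: complex);
                   B = K^4 + \<i> * K^3 - \<i> * K;
                   C = K^6 + \<i> * K^3 + K^2
               in (- B + (if sg then 1 else -1) * csqrt (B^2 - 4 * C)) / 2)"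

definition eta :: "bool \<Rightarrow> int \<Rightarrow> complex" where
  "eta sg k = (let K = (of_int k :: complex); l = lam sg k
               in - \<i> * K^5 - (1 + l) * \<i> * K + K^2 - l)"

definition theta :: "bool \<Rightarrow> int \<Rightarrow> complex" where
  "theta sg k = eta sg k / lam sg k"

definition gam :: "(int \<Rightarrow> complex) \<Rightarrow> (int \<Rightarrow> complex) \<Rightarrow> bool \<Rightarrow> int \<Rightarrow> complex" where
  "gam a b sg k = a k + cnj (theta sg k) * b k"

end

theory Submission
  imports Defs
begin

text \<open>Each Fourier mode k evolves on its own: (U k, V k) solves a linear 2 x 2 system whose
  matrix has the left eigenvectors (1, cnj (theta sg k)) for the eigenvalues cnj (lam sg k).
  Hence z = U k + cnj (theta sg k) V k solves the scalar equation z' = cnj (lam sg k) z + f_k g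
  with z(0) = gam a b sg k, and by Duhamel's formula z(T) vanishes exactly when the k-th moment
  identity holds (after the shift t \<mapsto> t + T/2). Since the two values of theta differ, the
  mode ends at zero iff both values of z(T) do. The mode k = 0 has the zero matrix, and
  b 0 = 0 keeps V 0 at zero. Conversely every mode is solvable, by recombining the two scalar
  solutions, so the quantification over all solutions in (i) is never vacuous and the
  equivalence already holds for each fixed a, b, f, g.\<close>

section \<open>Integrals over compact intervals\<close>

lemma set_integrable_mult_continuous:
  fixes g h :: "real \<Rightarrow> complex"
  assumes h: "set_integrable lborel {a..b} h" and g: "continuous_on {a..b} g"
  shows "set_integrable lborel {a..b} (\<lambda>s. g s * h s)"
proof -
  obtain M where M: "\<forall>s\<in>{a..b}. norm (g s) \<le> M"
    using compact_imp_bounded[OF compact_continuous_image[OF g compact_Icc]]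
    unfolding bounded_iff by blast
  have "(\<lambda>s. (indicator {a..b} s *\<^sub>R g s) * (indicator {a..b} s *\<^sub>R h s)) \<in> borel_measurable lborel"
    using borel_measurable_continuous_on_indicator[OF _ g] h
    by (intro borel_measurable_times) (auto simp: set_integrable_def)
  then have "set_borel_measurable lborel {a..b} (\<lambda>s. g s * h s)"
    unfolding set_borel_measurable_def by (rule measurable_cong[THEN iffD1, rotated]) (auto split: split_indicator)
  moreover have "AE s in lborel. s \<in> {a..b} \<longrightarrow> norm (g s * h s) \<le> norm (M * norm (h s))"
    using M by (auto simp: norm_mult intro!: mult_right_mono order_trans[OF _ abs_ge_self])
  ultimately show ?thesis
    by (rule set_integrable_bound[OF set_integrable_mult_right[OF set_integrable_norm[OF h]]])
qed

lemma set_integral_triangle_swap: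
  fixes h \<phi> :: "real \<Rightarrow> complex"
  assumes h: "set_integrable lborel {0..t} h" and \<phi>: "continuous_on {0..t} \<phi>"
  shows "(LINT s:{0..t}|lborel. \<phi> s * (LINT r:{0..s}|lborel. h r))
       = (LINT r:{0..t}|lborel. h r * (LINT s:{r..t}|lborel. \<phi> s))"
proof -
  define h' where "h' r = indicator {0..t} r *\<^sub>R h r" for r
  define \<phi>' where "\<phi>' s = indicator {0..t} s *\<^sub>R \<phi> s" for s
  have ih: "integrable lborel h'" using h unfolding h'_def set_integrable_def .
  have i\<phi>: "integrable lborel \<phi>'" using borel_integrable_atLeastAtMost'[OF \<phi>]
    unfolding \<phi>'_def set_integrable_def .
  have [measurable]: "h' \<in> borel_measurable lborel" "\<phi>' \<in> borel_measurable lborel"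
    using ih i\<phi> by auto
  define H where "H r s = (if r \<le> s then h' r * \<phi>' s else 0)" for r s
  have [measurable]: "case_prod H \<in> borel_measurable (lborel \<Otimes>\<^sub>M lborel)"
    unfolding H_def by measurable
  have "integrable (lborel \<Otimes>\<^sub>M lborel) (\<lambda>(r,s). h' r * \<phi>' s)"
    by (rule lborel_pair.Fubini_integrable) (auto simp: norm_mult i\<phi> ih)
  then have "integrable (lborel \<Otimes>\<^sub>M lborel) (case_prod H)"
    by (rule Bochner_Integration.integrable_bound) (auto simp: H_def norm_mult)
  then have "(LINT s|lborel. LINT r|lborel. H r s) = (LINT r|lborel. LINT s|lborel. H r s)"
    by (rule lborel_pair.Fubini_integral)
  moreover have "(LINT r|lborel. H r s) = indicator {0..t} s *\<^sub>R (\<phi> s * (LINT r:{0..s}|lborel. h r))" for s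
  proof -
    have H: "H r s = \<phi>' s * (indicator {0..s} r *\<^sub>R h r)" for r
      unfolding H_def h'_def \<phi>'_def by (auto split: split_indicator)
    show ?thesis
      unfolding H set_lebesgue_integral_def integral_mult_right_zero \<phi>'_def by (simp split: split_indicator)
  qed
  moreover have "(LINT s|lborel. H r s) = indicator {0..t} r *\<^sub>R (h r * (LINT s:{r..t}|lborel. \<phi> s))" for r
  proof -
    have H: "H r s = h' r * (indicator {r..t} s *\<^sub>R \<phi> s)" for s
      unfolding H_def h'_def \<phi>'_def by (auto split: split_indicator)
    show ?thesis
      unfolding H set_lebesgue_integral_def integral_mult_right_zero h'_def by (simp split: split_indicator)
  qed
  ultimately show ?thesis
    unfolding set_lebesgue_integral_def by simp
qed

lemma L2_on_imp_set_integrable: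
  fixes g :: "real \<Rightarrow> complex"
  assumes "L2_on {a<..<b} g"
  shows "set_integrable lborel {a..b} g"
proof -
  have g: "set_borel_measurable lborel {a<..<b} g"
    and g2: "set_integrable lborel {a<..<b} (\<lambda>x. (cmod (g x))^2)"
    using assms unfolding L2_on_def by auto
  have "set_integrable lborel {a<..<b} (\<lambda>x. 1 + (cmod (g x))^2)"
    using g2
    by (intro set_integral_add(1)
        set_integrable_subset[OF borel_integrable_atLeastAtMost'[of a b "\<lambda>_. 1::real"]]) auto
  moreover have "norm (g x) \<le> norm (1 + (cmod (g x))^2)" for x
  proof -
    have "2 * cmod (g x) \<le> 1 + (cmod (g x))^2"
      using zero_le_power2[of "cmod (g x) - 1"] by (simp add: power2_diff)
    then have "cmod (g x) \<le> 1 + (cmod (g x))^2"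
      using norm_ge_zero[of "g x"] by linarith
    then show ?thesis
      by simp
  qed
  ultimately have "set_integrable lborel {a<..<b} g"
    by (intro set_integrable_bound[OF _ g] AE_I2) auto
  moreover have "({a..b} - {a<..<b}) \<union> ({a<..<b} - {a..b}) \<subseteq> {a, b}"
    by auto
  ultimately show ?thesis
    using set_integrable_discrete_difference[of "{a, b}" "{a..b}" "{a<..<b}" lborel g] by simp
qed

lemma exp_mult_of_real_has_vector_derivative:
  fixes \<mu> :: "'a::{real_normed_field,banach}"
  shows "((\<lambda>s. exp (\<mu> * of_real s)) has_vector_derivative (\<mu> * exp (\<mu> * of_real x))) (at x within S)"
proof -
  have "((\<lambda>w. exp (\<mu> * w)) has_field_derivative \<mu> * exp (\<mu> * of_real x)) (at (of_real x))"
    by (auto intro!: derivative_eq_intros)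
  then show ?thesis
    by (rule has_vector_derivative_real_field)
qed

lemma set_integral_exp_mult_of_real:
  fixes \<mu> :: complex
  assumes "a \<le> b"
  shows "(LINT s:{a..b}|lborel. \<mu> * exp (\<mu> * of_real s)) = exp (\<mu> * of_real b) - exp (\<mu> * of_real a)"
  unfolding set_lebesgue_integral_def
  by (rule integral_FTC_atLeastAtMost[OF assms exp_mult_of_real_has_vector_derivative])
    (intro continuous_intros)

lemma continuous_on_indefinite_set_integral:
  fixes h :: "real \<Rightarrow> complex"
  assumes h: "set_integrable lborel {a..b} h"
  shows "continuous_on {a..b} (\<lambda>t. LINT s:{a..t}|lborel. h s)"
proof -
  have "continuous_on {a..b} (\<lambda>t. integral {a..t} h)"
    using indefinite_integral_continuous_1 set_borel_integral_eq_integral(1)[OF h] by blast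
  moreover have "(LINT s:{a..t}|lborel. h s) = integral {a..t} h" if "t \<in> {a..b}" for t
    using that by (intro set_borel_integral_eq_integral(2) set_integrable_subset[OF h]) auto
  ultimately show ?thesis
    using continuous_on_eq by force
qed

lemma set_integral_Icc_translate:
  fixes f :: "real \<Rightarrow> 'a::{banach, second_countable_topology}"
  shows "(LINT x:{a..b}|lborel. f (x + d)) = (LINT x:{a + d..b + d}|lborel. f x)"
proof -
  have "(LINT x:{a + d..b + d}|lborel. f x)
      = (\<integral>x. indicator {a + d..b + d} (d + 1 * x) *\<^sub>R f (d + 1 * x) \<partial>lborel)"
    unfolding set_lebesgue_integral_def
    using lborel_integral_real_affine[where c = 1 and t = d
        and f = "\<lambda>x. indicator {a + d..b + d} x *\<^sub>R f x"] by simp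
  also have "\<dots> = (LINT x:{a..b}|lborel. f (x + d))"
    unfolding set_lebesgue_integral_def
    by (intro Bochner_Integration.integral_cong) (auto split: split_indicator simp: add.commute)
  finally show ?thesis ..
qed

section \<open>The scalar equation z' = \<mu> z + h\<close>

definition solves_scalar_ode ::
  "real \<Rightarrow> complex \<Rightarrow> (real \<Rightarrow> complex) \<Rightarrow> complex \<Rightarrow> (real \<Rightarrow> complex) \<Rightarrow> bool" where
  "solves_scalar_ode T \<mu> h z0 z \<longleftrightarrow> continuous_on {0..T} z \<and>
     (\<forall>t\<in>{0..T}. set_integrable lborel {0..t} (\<lambda>s. \<mu> * z s + h s) \<and>
        z t = z0 + (LINT s:{0..t}|lborel. \<mu> * z s + h s))"

definition duhamel :: "complex \<Rightarrow> complex \<Rightarrow> (real \<Rightarrow> complex) \<Rightarrow> real \<Rightarrow> complex" where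
  "duhamel \<mu> z0 h t = exp (\<mu> * t) * (z0 + (LINT s:{0..t}|lborel. exp (- \<mu> * s) * h s))"

lemma continuous_on_duhamel:
  assumes "set_integrable lborel {0..T} h"
  shows "continuous_on {0..T} (duhamel \<mu> z0 h)"
  unfolding duhamel_def[abs_def]
  using assms by (intro continuous_intros continuous_on_indefinite_set_integral
      set_integrable_mult_continuous)

lemma set_integral_exp_times_indefinite_integral:
  fixes h :: "real \<Rightarrow> complex"
  assumes h: "set_integrable lborel {0..t} h"
  shows "(LINT s:{0..t}|lborel. \<mu> * exp (\<mu> * s) * (LINT r:{0..s}|lborel. exp (- \<mu> * r) * h r))
       = exp (\<mu> * t) * (LINT r:{0..t}|lborel. exp (- \<mu> * r) * h r) - (LINT r:{0..t}|lborel. h r)"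
proof -
  have eh: "set_integrable lborel {0..t} (\<lambda>r. exp (- \<mu> * r) * h r)"
    using h by (intro set_integrable_mult_continuous continuous_intros)
  have "(LINT s:{0..t}|lborel. \<mu> * exp (\<mu> * s) * (LINT r:{0..s}|lborel. exp (- \<mu> * r) * h r))
      = (LINT r:{0..t}|lborel. exp (- \<mu> * r) * h r * (LINT s:{r..t}|lborel. \<mu> * exp (\<mu> * s)))"
    using eh by (intro set_integral_triangle_swap continuous_intros)
  also have "\<dots> = (LINT r:{0..t}|lborel. exp (\<mu> * t) * (exp (- \<mu> * r) * h r) - h r)"
  proof (intro set_lebesgue_integral_cong allI impI)
    fix r assume "r \<in> {0..t}"
    then have "exp (- \<mu> * r) * h r * (LINT s:{r..t}|lborel. \<mu> * exp (\<mu> * s))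
        = exp (- \<mu> * r) * h r * (exp (\<mu> * t) - exp (\<mu> * r))"
      by (subst set_integral_exp_mult_of_real) auto
    also have "\<dots> = exp (\<mu> * t) * (exp (- \<mu> * r) * h r) - (exp (- \<mu> * r) * exp (\<mu> * r)) * h r"
      by (simp add: algebra_simps)
    finally show "exp (- \<mu> * r) * h r * (LINT s:{r..t}|lborel. \<mu> * exp (\<mu> * s))
        = exp (\<mu> * t) * (exp (- \<mu> * r) * h r) - h r"
      by (simp flip: exp_add)
  qed simp
  also have "\<dots> = exp (\<mu> * t) * (LINT r:{0..t}|lborel. exp (- \<mu> * r) * h r) - (LINT r:{0..t}|lborel. h r)"
    using eh h by (simp add: set_integral_diff(2) set_integral_mult_right)
  finally show ?thesis .
qed

lemma solves_scalar_ode_duhamel: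
  assumes h: "set_integrable lborel {0..T} h"
  shows "solves_scalar_ode T \<mu> h z0 (duhamel \<mu> z0 h)"
  unfolding solves_scalar_ode_def
proof (intro conjI ballI continuous_on_duhamel[OF h])
  fix t assume t: "t \<in> {0..T}"
  let ?E = "\<lambda>s. exp (\<mu> * s)"
  let ?F = "\<lambda>s. LINT r:{0..s}|lborel. exp (- \<mu> * r) * h r"
  have ht: "set_integrable lborel {0..t} h"
    using t by (intro set_integrable_subset[OF h]) auto
  have "continuous_on {0..t} (duhamel \<mu> z0 h)"
    using t by (intro continuous_on_subset[OF continuous_on_duhamel[OF h]]) auto
  then have i1: "set_integrable lborel {0..t} (\<lambda>s. \<mu> * duhamel \<mu> z0 h s)"
    by (intro borel_integrable_atLeastAtMost' continuous_intros)
  then show "set_integrable lborel {0..t} (\<lambda>s. \<mu> * duhamel \<mu> z0 h s + h s)"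
    using ht by (rule set_integral_add(1))
  have "set_integrable lborel {0..t} (\<lambda>r. exp (- \<mu> * r) * h r)"
    using ht by (intro set_integrable_mult_continuous continuous_intros)
  note F = continuous_on_indefinite_set_integral[OF this]
  have iE: "set_integrable lborel {0..t} (\<lambda>s. \<mu> * ?E s)"
    by (intro borel_integrable_atLeastAtMost' continuous_intros)
  have iEF: "set_integrable lborel {0..t} (\<lambda>s. \<mu> * ?E s * ?F s)"
    by (intro borel_integrable_atLeastAtMost' continuous_intros F)
  have "(LINT s:{0..t}|lborel. \<mu> * duhamel \<mu> z0 h s + h s)
      = (LINT s:{0..t}|lborel. z0 * (\<mu> * ?E s) + \<mu> * ?E s * ?F s + h s)"
    by (intro set_lebesgue_integral_cong) (auto simp: duhamel_def algebra_simps)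
  also have "\<dots> = z0 * (LINT s:{0..t}|lborel. \<mu> * ?E s) + (LINT s:{0..t}|lborel. \<mu> * ?E s * ?F s)
      + (LINT s:{0..t}|lborel. h s)"
    using iE iEF ht by (simp add: set_integral_add(2) set_integral_mult_right)
  also have "\<dots> = duhamel \<mu> z0 h t - z0"
    using t unfolding set_integral_exp_times_indefinite_integral[OF ht]
    by (subst set_integral_exp_mult_of_real) (auto simp: duhamel_def algebra_simps)
  finally show "duhamel \<mu> z0 h t = z0 + (LINT s:{0..t}|lborel. \<mu> * duhamel \<mu> z0 h s + h s)"
    by simp
qed

lemma integral_fixpoint_eq_zero:
  fixes w :: "real \<Rightarrow> 'a::{real_normed_field,banach}"
  assumes w: "continuous_on {0..T} w"
    and w_eq: "\<And>t. t \<in> {0..T} \<Longrightarrow> w t = \<mu> * integral {0..t} w"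
    and t: "t \<in> {0..T}"
  shows "w t = 0"
proof -
  define y where "y s = exp (- \<mu> * of_real s) * w s" for s
  have "(y has_vector_derivative 0) (at s within {0..T})" if s: "s \<in> {0..T}" for s
  proof -
    have "((\<lambda>x. \<mu> * integral {0..x} w) has_vector_derivative \<mu> * w s) (at s within {0..T})"
      by (rule has_vector_derivative_mult_right[OF integral_has_vector_derivative[OF w s]])
    then have "(w has_vector_derivative \<mu> * w s) (at s within {0..T})"
      by (rule has_vector_derivative_transform[OF s w_eq, rotated])
    then have "(y has_vector_derivative exp (- \<mu> * of_real s) * (\<mu> * w s)
          + (- \<mu> * exp (- \<mu> * of_real s)) * w s) (at s within {0..T})"
      unfolding y_def[abs_def] by (rule has_vector_derivative_mult[OF exp_mult_of_real_has_vector_derivative])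
    then show ?thesis
      by (simp add: algebra_simps)
  qed
  then obtain c where "\<And>s. s \<in> {0..T} \<Longrightarrow> y s = c"
    using has_vector_derivative_zero_constant[of "{0..T}" y] by auto
  moreover have "0 \<in> {0..T}"
    using t by auto
  ultimately have "y t = y 0"
    using t by metis
  also have "y 0 = 0"
    using w_eq[OF \<open>0 \<in> {0..T}\<close>] by (simp add: y_def)
  finally show ?thesis
    by (simp add: y_def)
qed

lemma solves_scalar_ode_unique:
  assumes z1: "solves_scalar_ode T \<mu> h z0 z1" and z2: "solves_scalar_ode T \<mu> h z0 z2"
    and t: "t \<in> {0..T}"
  shows "z1 t = z2 t"
proof -
  define w where "w s = z1 s - z2 s" for s
  have cont: "continuous_on {0..T} w"
    using z1 z2 unfolding w_def[abs_def] solves_scalar_ode_def by (intro continuous_intros) auto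
  have "w s = \<mu> * integral {0..s} w" if s: "s \<in> {0..T}" for s
  proof -
    have "w s = (LINT r:{0..s}|lborel. \<mu> * z1 r + h r) - (LINT r:{0..s}|lborel. \<mu> * z2 r + h r)"
      using z1 z2 s unfolding solves_scalar_ode_def w_def by auto
    also have "\<dots> = (LINT r:{0..s}|lborel. (\<mu> * z1 r + h r) - (\<mu> * z2 r + h r))"
      using z1 z2 s unfolding solves_scalar_ode_def by (intro set_integral_diff(2)[symmetric]) auto
    also have "\<dots> = (LINT r:{0..s}|lborel. \<mu> * w r)"
      by (simp add: w_def algebra_simps)
    also have "\<dots> = \<mu> * integral {0..s} w"
      using s by (simp add: set_borel_integral_eq_integral(2) borel_integrable_atLeastAtMost'
          continuous_on_subset[OF cont])
    finally show ?thesis .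
  qed
  then have "w t = 0"
    using integral_fixpoint_eq_zero[OF cont _ t] by blast
  then show ?thesis
    by (simp add: w_def)
qed

lemma solves_scalar_ode_eq_duhamel:
  assumes "set_integrable lborel {0..T} h" "solves_scalar_ode T \<mu> h z0 z" "t \<in> {0..T}"
  shows "z t = duhamel \<mu> z0 h t"
  using assms solves_scalar_ode_unique solves_scalar_ode_duhamel by blast

lemma duhamel_eq_0_iff_moment:
  fixes g :: "real \<Rightarrow> complex"
  shows "duhamel \<mu> z0 (\<lambda>s. c * g s) T = 0 \<longleftrightarrow>
    c * (LINT t:{-T/2..T/2}|lborel. exp (- \<mu> * of_real t) * g (t + T/2))
      = - exp (\<mu> * of_real (T/2)) * z0"
proof -
  define I where "I = (LINT s:{0..T}|lborel. exp (- \<mu> * s) * g s)"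
  have "(LINT t:{-T/2..T/2}|lborel. exp (- \<mu> * of_real t) * g (t + T/2))
      = (LINT s:{0..T}|lborel. exp (- \<mu> * of_real (s - T/2)) * g s)"
    using set_integral_Icc_translate[where f = "\<lambda>s. exp (- \<mu> * of_real (s - T/2)) * g s"
        and a = "-T/2" and b = "T/2" and d = "T/2"] by simp
  also have "\<dots> = (LINT s:{0..T}|lborel. exp (\<mu> * of_real (T/2)) * (exp (- \<mu> * s) * g s))"
    by (simp add: algebra_simps flip: exp_add)
  also have "\<dots> = exp (\<mu> * of_real (T/2)) * I"
    unfolding I_def by (rule set_integral_mult_right)
  finally have moment: "(LINT t:{-T/2..T/2}|lborel. exp (- \<mu> * of_real t) * g (t + T/2))
      = exp (\<mu> * of_real (T/2)) * I" .
  have "duhamel \<mu> z0 (\<lambda>s. c * g s) T = exp (\<mu> * T) * (z0 + c * I)"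
    unfolding duhamel_def I_def by (simp add: mult.left_commute[of _ c])
  moreover have "c * (exp (\<mu> * of_real (T/2)) * I) = - exp (\<mu> * of_real (T/2)) * z0
      \<longleftrightarrow> exp (\<mu> * of_real (T/2)) * (z0 + c * I) = 0"
    by (auto simp: algebra_simps eq_neg_iff_add_eq_0)
  ultimately show ?thesis
    unfolding moment by simp
qed

section \<open>Linear 2 x 2 systems with two left eigenvectors\<close>

definition solves_system_ode ::
  "real \<Rightarrow> complex \<Rightarrow> complex \<Rightarrow> complex \<Rightarrow> complex \<Rightarrow> (real \<Rightarrow> complex) \<Rightarrow> complex \<Rightarrow> complex
   \<Rightarrow> (real \<Rightarrow> complex) \<Rightarrow> (real \<Rightarrow> complex) \<Rightarrow> bool" where
  "solves_system_ode T m11 m12 m21 m22 h u0 v0 u v \<longleftrightarrow>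
     continuous_on {0..T} u \<and> continuous_on {0..T} v \<and>
     (\<forall>t\<in>{0..T}.
        set_integrable lborel {0..t} (\<lambda>s. m11 * u s + m12 * v s + h s) \<and>
        set_integrable lborel {0..t} (\<lambda>s. m22 * v s + m21 * u s) \<and>
        u t = u0 + (LINT s:{0..t}|lborel. m11 * u s + m12 * v s + h s) \<and>
        v t = v0 + (LINT s:{0..t}|lborel. m22 * v s + m21 * u s))"

lemma left_eigenvector_combination:
  fixes m11 m12 m21 m22 c \<mu> x y :: "'a::comm_ring"
  assumes "m11 + c * m21 = \<mu>" "m12 + c * m22 = \<mu> * c"
  shows "\<mu> * (x + c * y) = (m11 * x + m12 * y) + c * (m22 * y + m21 * x)"
proof -
  have "\<mu> * (x + c * y) = (m11 + c * m21) * x + (m12 + c * m22) * y"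
    by (simp only: assms) (simp add: algebra_simps)
  then show ?thesis
    by (simp add: algebra_simps)
qed

lemma left_eigenvector_of_char_root:
  fixes m11 m12 m21 m22 c \<mu> :: "'a::field"
  assumes "m21 \<noteq> 0" and eig: "m11 + c * m21 = \<mu>"
    and root: "\<mu>^2 - (m11 + m22) * \<mu> + (m11 * m22 - m12 * m21) = 0"
  shows "m12 + c * m22 = \<mu> * c"
proof -
  have "m21 * (m12 + c * m22 - \<mu> * c) = - (\<mu>^2 - (m11 + m22) * \<mu> + (m11 * m22 - m12 * m21))"
    unfolding eig[symmetric] by (simp add: algebra_simps power2_eq_square)
  then show ?thesis
    using assms by simp
qed

lemma solves_system_ode_left_eigenvector:
  assumes sol: "solves_system_ode T m11 m12 m21 m22 h u0 v0 u v"
    and eig: "m11 + c * m21 = \<mu>" "m12 + c * m22 = \<mu> * c"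
  shows "solves_scalar_ode T \<mu> h (u0 + c * v0) (\<lambda>t. u t + c * v t)"
  unfolding solves_scalar_ode_def
proof (intro conjI ballI)
  show "continuous_on {0..T} (\<lambda>t. u t + c * v t)"
    using sol unfolding solves_system_ode_def by (intro continuous_intros) auto
  fix t assume "t \<in> {0..T}"
  then have iu: "set_integrable lborel {0..t} (\<lambda>s. m11 * u s + m12 * v s + h s)"
    and iv: "set_integrable lborel {0..t} (\<lambda>s. m22 * v s + m21 * u s)"
    and ut: "u t = u0 + (LINT s:{0..t}|lborel. m11 * u s + m12 * v s + h s)"
    and vt: "v t = v0 + (LINT s:{0..t}|lborel. m22 * v s + m21 * u s)"
    using sol unfolding solves_system_ode_def by auto
  have split: "\<mu> * (u s + c * v s) + h s
      = (m11 * u s + m12 * v s + h s) + c * (m22 * v s + m21 * u s)" for s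
    using left_eigenvector_combination[OF eig, of "u s" "v s"] by (simp add: algebra_simps)
  show "set_integrable lborel {0..t} (\<lambda>s. \<mu> * (u s + c * v s) + h s)"
    unfolding split by (rule set_integral_add(1)[OF iu set_integrable_mult_right[OF iv]])
  show "u t + c * v t = u0 + c * v0 + (LINT s:{0..t}|lborel. \<mu> * (u s + c * v s) + h s)"
    unfolding split set_integral_add(2)[OF iu set_integrable_mult_right[OF iv]]
      set_integral_mult_right
    by (subst ut, subst vt) algebra
qed

lemma solves_system_ode_of_left_eigenvectors:
  assumes c: "c1 \<noteq> c2"
    and eig1: "m11 + c1 * m21 = \<mu>1" "m12 + c1 * m22 = \<mu>1 * c1"
    and eig2: "m11 + c2 * m21 = \<mu>2" "m12 + c2 * m22 = \<mu>2 * c2"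
    and z1: "solves_scalar_ode T \<mu>1 h (u0 + c1 * v0) z1"
    and z2: "solves_scalar_ode T \<mu>2 h (u0 + c2 * v0) z2"
  defines "v \<equiv> \<lambda>t. (z1 t - z2 t) / (c1 - c2)"
  defines "u \<equiv> \<lambda>t. z1 t - c1 * v t"
  shows "solves_system_ode T m11 m12 m21 m22 h u0 v0 u v"
  unfolding solves_system_ode_def
proof (intro conjI ballI)
  have d: "c1 - c2 \<noteq> 0"
    using c by simp
  have cz: "continuous_on {0..T} z1" "continuous_on {0..T} z2"
    using z1 z2 unfolding solves_scalar_ode_def by auto
  show cv: "continuous_on {0..T} v"
    unfolding v_def using d by (intro continuous_intros cz) auto
  show "continuous_on {0..T} u"
    unfolding u_def by (intro continuous_intros cz cv)
  fix t assume "t \<in> {0..T}"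
  then have i1: "set_integrable lborel {0..t} (\<lambda>s. \<mu>1 * z1 s + h s)"
    and i2: "set_integrable lborel {0..t} (\<lambda>s. \<mu>2 * z2 s + h s)"
    and z1t: "z1 t = u0 + c1 * v0 + (LINT s:{0..t}|lborel. \<mu>1 * z1 s + h s)"
    and z2t: "z2 t = u0 + c2 * v0 + (LINT s:{0..t}|lborel. \<mu>2 * z2 s + h s)"
    using z1 z2 unfolding solves_scalar_ode_def by auto
  have z1u: "z1 s = u s + c1 * v s" for s
    by (simp add: u_def)
  have z2u: "z2 s = u s + c2 * v s" for s
  proof -
    have "(c1 - c2) * v s = z1 s - z2 s"
      using d by (simp add: v_def)
    then show ?thesis
      by (simp add: u_def algebra_simps)
  qed
  have A: "m11 * u s + m12 * v s + h s = (\<mu>1 * z1 s + h s) - c1 * (m22 * v s + m21 * u s)" for s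
    unfolding z1u left_eigenvector_combination[OF eig1] by simp
  have B: "m22 * v s + m21 * u s = ((\<mu>1 * z1 s + h s) - (\<mu>2 * z2 s + h s)) / (c1 - c2)" for s
  proof -
    have "(\<mu>1 * z1 s + h s) - (\<mu>2 * z2 s + h s) = (c1 - c2) * (m22 * v s + m21 * u s)"
      unfolding z1u z2u left_eigenvector_combination[OF eig1] left_eigenvector_combination[OF eig2]
      by (simp add: algebra_simps)
    then show ?thesis
      using d by (simp add: field_simps)
  qed
  show iB: "set_integrable lborel {0..t} (\<lambda>s. m22 * v s + m21 * u s)"
    unfolding B using i1 i2 by (intro set_integrable_divide set_integral_diff(1))
  show "set_integrable lborel {0..t} (\<lambda>s. m11 * u s + m12 * v s + h s)"
    unfolding A using i1 iB by (intro set_integral_diff(1) set_integrable_mult_right)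
  have IB: "(LINT s:{0..t}|lborel. m22 * v s + m21 * u s) = v t - v0"
    unfolding B set_integral_divide_zero set_integral_diff(2)[OF i1 i2]
    using d by (simp add: z1t z2t v_def field_simps)
  show "v t = v0 + (LINT s:{0..t}|lborel. m22 * v s + m21 * u s)"
    by (simp add: IB)
  show "u t = u0 + (LINT s:{0..t}|lborel. m11 * u s + m12 * v s + h s)"
    unfolding A set_integral_diff(2)[OF i1 set_integrable_mult_right[OF iB]] set_integral_mult_right IB
    using z1t z1u[of t] by algebra
qed

lemma solves_system_ode_null_iff:
  assumes h: "set_integrable lborel {0..T} h" and T: "0 \<le> T" and c: "c1 \<noteq> c2"
    and eig1: "m11 + c1 * m21 = \<mu>1" "m12 + c1 * m22 = \<mu>1 * c1"
    and eig2: "m11 + c2 * m21 = \<mu>2" "m12 + c2 * m22 = \<mu>2 * c2"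
  shows "(\<forall>u v. solves_system_ode T m11 m12 m21 m22 h u0 v0 u v \<longrightarrow> u T = 0 \<and> v T = 0) \<longleftrightarrow>
    duhamel \<mu>1 (u0 + c1 * v0) h T = 0 \<and> duhamel \<mu>2 (u0 + c2 * v0) h T = 0"
    (is "?null \<longleftrightarrow> ?z1 T = 0 \<and> ?z2 T = 0")
proof
  assume ?null
  moreover have "solves_system_ode T m11 m12 m21 m22 h u0 v0
      (\<lambda>t. ?z1 t - c1 * ((?z1 t - ?z2 t) / (c1 - c2))) (\<lambda>t. (?z1 t - ?z2 t) / (c1 - c2))"
    by (rule solves_system_ode_of_left_eigenvectors[OF c eig1 eig2
          solves_scalar_ode_duhamel[OF h] solves_scalar_ode_duhamel[OF h]])
  ultimately have "?z1 T - c1 * ((?z1 T - ?z2 T) / (c1 - c2)) = 0" "(?z1 T - ?z2 T) / (c1 - c2) = 0"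
    by blast+
  then show "?z1 T = 0 \<and> ?z2 T = 0"
    using c by simp
next
  assume z: "?z1 T = 0 \<and> ?z2 T = 0"
  show ?null
  proof (intro allI impI)
    fix u v assume sol: "solves_system_ode T m11 m12 m21 m22 h u0 v0 u v"
    have zs: "u T + c1 * v T = 0" "u T + c2 * v T = 0"
      using z T solves_scalar_ode_eq_duhamel[OF h solves_system_ode_left_eigenvector[OF sol eig1]]
        solves_scalar_ode_eq_duhamel[OF h solves_system_ode_left_eigenvector[OF sol eig2]] by auto
    have "(c1 - c2) * v T = (u T + c1 * v T) - (u T + c2 * v T)"
      by (simp add: algebra_simps)
    then have "v T = 0"
      using c zs by simp
    then show "u T = 0 \<and> v T = 0"
      using zs by simp
  qed
qed

lemma solves_system_ode_exists:
  assumes h: "set_integrable lborel {0..T} h" and c: "c1 \<noteq> c2"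
    and eig1: "m11 + c1 * m21 = \<mu>1" "m12 + c1 * m22 = \<mu>1 * c1"
    and eig2: "m11 + c2 * m21 = \<mu>2" "m12 + c2 * m22 = \<mu>2 * c2"
  shows "\<exists>u v. solves_system_ode T m11 m12 m21 m22 h u0 v0 u v"
  using solves_system_ode_of_left_eigenvectors[OF c eig1 eig2
      solves_scalar_ode_duhamel[OF h] solves_scalar_ode_duhamel[OF h]] by blast

lemma null_at_iff_componentwise:
  fixes P :: "'i \<Rightarrow> ('t \<Rightarrow> 'a::zero) \<Rightarrow> ('t \<Rightarrow> 'b::zero) \<Rightarrow> bool"
  assumes solvable: "\<And>k. \<exists>u v. P k u v"
  shows "(\<forall>U V. (\<forall>k. P k (\<lambda>t. U t k) (\<lambda>t. V t k)) \<longrightarrow> U T = (\<lambda>k. 0) \<and> V T = (\<lambda>k. 0)) \<longleftrightarrow>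
    (\<forall>k u v. P k u v \<longrightarrow> u T = 0 \<and> v T = 0)"
proof (intro iffI allI impI)
  fix k u v
  assume null: "\<forall>U V. (\<forall>k. P k (\<lambda>t. U t k) (\<lambda>t. V t k)) \<longrightarrow> U T = (\<lambda>k. 0) \<and> V T = (\<lambda>k. 0)"
    and "P k u v"
  obtain us vs where sol: "\<And>j. P j (us j) (vs j)"
    using solvable by metis
  define U where "U t j = (if j = k then u t else us j t)" for t j
  define V where "V t j = (if j = k then v t else vs j t)" for t j
  have "P j (\<lambda>t. U t j) (\<lambda>t. V t j)" for j
    using sol \<open>P k u v\<close> by (cases "j = k") (simp_all add: U_def V_def)
  then have "U T = (\<lambda>k. 0) \<and> V T = (\<lambda>k. 0)"
    using null by blast
  then have "U T k = 0" "V T k = 0"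
    by simp_all
  then show "u T = 0 \<and> v T = 0"
    by (simp add: U_def V_def)
next
  fix U V
  assume null: "\<forall>k u v. P k u v \<longrightarrow> u T = 0 \<and> v T = 0"
    and sol: "\<forall>k. P k (\<lambda>t. U t k) (\<lambda>t. V t k)"
  have "U T k = 0 \<and> V T k = 0" for k
    using null[rule_format, OF sol[rule_format, of k]] by simp
  then show "U T = (\<lambda>k. 0) \<and> V T = (\<lambda>k. 0)"
    by (simp add: fun_eq_iff)
qed

section \<open>The Fourier modes of the control system\<close>

definition mode_m11 :: "int \<Rightarrow> complex" where
  "mode_m11 k = - ((dsym k)^4) - (dsym k)^3 - (dsym k)^2"

definition mode_m22 :: "int \<Rightarrow> complex" where
  "mode_m22 k = (dsym k)^2 - dsym k"

lemma is_solution_iff_modes: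
  "is_solution T f g a b U V \<longleftrightarrow>
    (\<forall>k. solves_system_ode T (mode_m11 k) (dsym k) (dsym k) (mode_m22 k) (\<lambda>s. fcoeff f k * g s)
      (a k) (b k) (\<lambda>t. U t k) (\<lambda>t. V t k))"
  unfolding is_solution_def solves_system_ode_def mode_m11_def mode_m22_def by blast

lemma quadratic_root_of_sqrt_discriminant:
  fixes b c s :: "'a::field_char_0"
  assumes "s^2 = b^2 - 4 * c"
  shows "((- b + s) / 2)^2 + b * ((- b + s) / 2) + c = 0"
proof -
  have "4 * (((- b + s) / 2)^2 + b * ((- b + s) / 2) + c) = s^2 - b^2 + 4 * c"
    by (simp add: field_simps power2_eq_square)
  also have "\<dots> = 0"
    using assms by simp
  finally show ?thesis
    by (simp only: mult_eq_0_iff) simp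
qed

lemma i_cube: "\<i> ^ 3 = - \<i>"
  by (simp add: power3_eq_cube)

lemma mode_entries_eq:
  "mode_m11 k = - ((of_int k)^4) + \<i> * (of_int k)^3 + (of_int k)^2"
  "mode_m22 k = - ((of_int k)^2) - \<i> * of_int k"
  "dsym k = \<i> * of_int k"
  unfolding mode_m11_def mode_m22_def dsym_def by (simp_all add: power_mult_distrib i_cube)

lemma lam_root:
  "(lam sg k)^2 + ((of_int k)^4 + \<i> * (of_int k)^3 - \<i> * of_int k) * lam sg k
     + ((of_int k)^6 + \<i> * (of_int k)^3 + (of_int k)^2) = 0"
proof -
  define B where "B = (of_int k :: complex)^4 + \<i> * (of_int k)^3 - \<i> * of_int k"
  define C where "C = (of_int k :: complex)^6 + \<i> * (of_int k)^3 + (of_int k)^2"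
  define S where "S = (if sg then 1 else -1) * csqrt (B^2 - 4 * C)"
  have lam: "lam sg k = (- B + S) / 2"
    unfolding lam_def Let_def B_def C_def S_def ..
  have "S^2 = B^2 - 4 * C"
    unfolding S_def by (simp add: power_mult_distrib)
  then show ?thesis
    unfolding lam B_def[symmetric] C_def[symmetric] by (rule quadratic_root_of_sqrt_discriminant)
qed

lemma cnj_lam_char_root:
  "(cnj (lam sg k))^2 - (mode_m11 k + mode_m22 k) * cnj (lam sg k)
     + (mode_m11 k * mode_m22 k - dsym k * dsym k) = 0"
proof -
  have "cnj ((lam sg k)^2 + ((of_int k)^4 + \<i> * (of_int k)^3 - \<i> * of_int k) * lam sg k
     + ((of_int k)^6 + \<i> * (of_int k)^3 + (of_int k)^2)) = 0"
    by (simp only: lam_root complex_cnj_zero)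
  then have "(cnj (lam sg k))^2 + ((of_int k)^4 - \<i> * (of_int k)^3 + \<i> * of_int k) * cnj (lam sg k)
     + ((of_int k)^6 - \<i> * (of_int k)^3 + (of_int k)^2) = 0"
    by simp
  then show ?thesis
    unfolding mode_entries_eq using i_squared by algebra
qed

lemma cnj_lam_nonzero:
  assumes "k \<noteq> 0"
  shows "cnj (lam sg k) \<noteq> 0"
proof
  assume "cnj (lam sg k) = 0"
  then have "mode_m11 k * mode_m22 k - dsym k * dsym k = 0"
    using cnj_lam_char_root[of sg k] by simp
  moreover have "mode_m11 k * mode_m22 k - dsym k * dsym k = of_int (k^6 + k^2) - \<i> * of_int (k^3)"
    unfolding mode_entries_eq of_int_add of_int_power using i_squared by algebra
  ultimately have "(k^3)^2 + k^2 = 0"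
    using arg_cong[of _ _ Re] by (fastforce simp flip: power_mult)
  moreover have "0 < k^2"
    using assms by simp
  ultimately show False
    using zero_le_power2[of "k^3"] by linarith
qed

lemma mode_left_eigenvector:
  assumes k: "k \<noteq> 0"
  shows "mode_m11 k + cnj (theta sg k) * dsym k = cnj (lam sg k)"
    and "dsym k + cnj (theta sg k) * mode_m22 k = cnj (lam sg k) * cnj (theta sg k)"
proof -
  let ?L = "cnj (lam sg k)"
  have "cnj (eta sg k) = \<i> * (of_int k)^5 + (1 + ?L) * \<i> * of_int k + (of_int k)^2 - ?L"
    unfolding eta_def Let_def by simp
  then have "?L * mode_m11 k + cnj (eta sg k) * dsym k = ?L^2"
    using cnj_lam_char_root[of sg k] unfolding mode_entries_eq using i_squared by algebra
  then show first: "mode_m11 k + cnj (theta sg k) * dsym k = ?L"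
    using cnj_lam_nonzero[OF k] unfolding theta_def by (simp add: field_simps power2_eq_square)
  show "dsym k + cnj (theta sg k) * mode_m22 k = ?L * cnj (theta sg k)"
    using k cnj_lam_char_root[of sg k]
    by (intro left_eigenvector_of_char_root[OF _ first]) (simp_all add: dsym_def)
qed

lemma int_square_neq_2: "(k::int)^2 \<noteq> 2"
proof
  assume k: "k^2 = 2"
  show False
  proof (cases "\<bar>k\<bar> \<le> 1")
    case True
    then have "k^2 \<le> 1"
      by (simp add: abs_square_le_1)
    then show False
      using k by simp
  next
    case False
    then have "2^2 \<le> \<bar>k\<bar>^2"
      by (intro power_mono) auto
    then show False
      using k by simp
  qed
qed

lemma lam_discriminant_nonzero:
  assumes "k \<noteq> 0"
  shows "((of_int k)^4 + \<i> * (of_int k)^3 - \<i> * of_int k)^2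
    - 4 * ((of_int k)^6 + \<i> * (of_int k)^3 + (of_int k)^2) \<noteq> (0::complex)" (is "?D \<noteq> 0")
proof
  assume D0: "?D = 0"
  define p where "p = k^8 - (k^3 - k)^2 - 4 * k^6 - 4 * k^2"
  define q where "q = 2 * k^3 * ((k^2 - 2) * (k^2 + 1))"
  have "?D = of_int p + \<i> * of_int q"
    unfolding p_def q_def of_int_add of_int_diff of_int_mult of_int_power of_int_numeral of_int_1
    using i_squared by algebra
  then have "of_int p + \<i> * of_int q = 0"
    using D0 by (rule trans[OF sym])
  then have "Im (of_int p + \<i> * of_int q) = 0"
    by (simp only: zero_complex.sel)
  then have "q = 0"
    by simp
  moreover have "k^2 + 1 \<noteq> 0"
    using zero_le_power2[of k] by linarith
  ultimately show False
    unfolding q_def using assms int_square_neq_2[of k] by simp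
qed

lemma cnj_theta_distinct:
  assumes k: "k \<noteq> 0"
  shows "cnj (theta True k) \<noteq> cnj (theta False k)"
proof
  assume "cnj (theta True k) = cnj (theta False k)"
  then have "lam True k = lam False k"
    using mode_left_eigenvector(1)[OF k, of True] mode_left_eigenvector(1)[OF k, of False] by simp
  then have "csqrt (((of_int k)^4 + \<i> * (of_int k)^3 - \<i> * of_int k)^2
      - 4 * ((of_int k)^6 + \<i> * (of_int k)^3 + (of_int k)^2)) = 0"
    unfolding lam_def Let_def by (simp add: field_simps)
  then show False
    using lam_discriminant_nonzero[OF k] by (simp only: csqrt_eq_0)
qed

definition steers_to_zero ::
  "real \<Rightarrow> (real \<Rightarrow> complex) \<Rightarrow> (real \<Rightarrow> complex) \<Rightarrow> (int \<Rightarrow> complex) \<Rightarrow> (int \<Rightarrow> complex) \<Rightarrow> bool" where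
  "steers_to_zero T f g a b \<longleftrightarrow>
     (\<forall>U V. is_solution T f g a b U V \<longrightarrow> U T = (\<lambda>k. 0) \<and> V T = (\<lambda>k. 0))"

definition moment_conditions ::
  "real \<Rightarrow> (real \<Rightarrow> complex) \<Rightarrow> (real \<Rightarrow> complex) \<Rightarrow> (int \<Rightarrow> complex) \<Rightarrow> (int \<Rightarrow> complex) \<Rightarrow> bool" where
  "moment_conditions T f g a b \<longleftrightarrow>
     (\<forall>k sg. k \<noteq> 0 \<longrightarrow>
        fcoeff f k * (LINT t:{-T/2..T/2}|lborel. exp (- cnj (lam sg k) * of_real t) * g (t + T/2))
        = - exp (cnj (lam sg k) * of_real (T/2)) * gam a b sg k) \<and>
     fcoeff f 0 * (LINT t:{-T/2..T/2}|lborel. g (t + T/2)) = - a 0"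

lemma mode_zero_entries: "mode_m11 0 = 0" "mode_m22 0 = 0" "dsym 0 = 0"
  by (simp_all add: mode_m11_def mode_m22_def dsym_def)

lemma mode_solvable:
  assumes g: "set_integrable lborel {0..T} g"
  shows "\<exists>u v. solves_system_ode T (mode_m11 k) (dsym k) (dsym k) (mode_m22 k)
    (\<lambda>s. fcoeff f k * g s) (a k) (b k) u v"
proof -
  have h: "set_integrable lborel {0..T} (\<lambda>s. fcoeff f k * g s)"
    using g by simp
  show ?thesis
  proof (cases "k = 0")
    case True
    \<comment> \<open>every (1, c) is a left eigenvector of the zero matrix\<close>
    show ?thesis
      using solves_system_ode_exists[OF h, of 0 1 "mode_m11 k" "dsym k" 0 "mode_m22 k" 0]
      by (simp add: True mode_zero_entries)
  next
    case False
    show ?thesis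
      by (rule solves_system_ode_exists[OF h cnj_theta_distinct[OF False]
            mode_left_eigenvector[OF False] mode_left_eigenvector[OF False]])
  qed
qed

lemma mode_null_iff_moment:
  assumes g: "set_integrable lborel {0..T} g" and T: "0 \<le> T" and k: "k \<noteq> 0"
  shows "(\<forall>u v. solves_system_ode T (mode_m11 k) (dsym k) (dsym k) (mode_m22 k)
      (\<lambda>s. fcoeff f k * g s) (a k) (b k) u v \<longrightarrow> u T = 0 \<and> v T = 0) \<longleftrightarrow>
    (\<forall>sg. fcoeff f k * (LINT t:{-T/2..T/2}|lborel. exp (- cnj (lam sg k) * of_real t) * g (t + T/2))
        = - exp (cnj (lam sg k) * of_real (T/2)) * gam a b sg k)"
  unfolding all_bool_eq gam_def duhamel_eq_0_iff_moment[symmetric]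
  using g by (intro solves_system_ode_null_iff T cnj_theta_distinct[OF k]
      mode_left_eigenvector[OF k]) simp

lemma mode_zero_null_iff_moment:
  assumes g: "set_integrable lborel {0..T} g" and T: "0 \<le> T"
  shows "(\<forall>u v. solves_system_ode T (mode_m11 0) (dsym 0) (dsym 0) (mode_m22 0)
      (\<lambda>s. c * g s) u0 0 u v \<longrightarrow> u T = 0 \<and> v T = 0) \<longleftrightarrow>
    c * (LINT t:{-T/2..T/2}|lborel. g (t + T/2)) = - u0"
proof -
  have "set_integrable lborel {0..T} (\<lambda>s. c * g s)"
    using g by simp
  from solves_system_ode_null_iff[OF this T, of 0 1 "mode_m11 0" "dsym 0" 0 "mode_m22 0" 0]
  show ?thesis
    using duhamel_eq_0_iff_moment[of 0 u0 c g T] by (simp add: mode_zero_entries)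
qed

lemma steers_to_zero_iff_moment_conditions:
  assumes g: "set_integrable lborel {0..T} g" and T: "0 \<le> T" and b0: "b 0 = 0"
  shows "steers_to_zero T f g a b \<longleftrightarrow> moment_conditions T f g a b"
proof -
  define null where "null k \<longleftrightarrow>
    (\<forall>u v. solves_system_ode T (mode_m11 k) (dsym k) (dsym k) (mode_m22 k)
      (\<lambda>s. fcoeff f k * g s) (a k) (b k) u v \<longrightarrow> u T = 0 \<and> v T = 0)" for k
  have "steers_to_zero T f g a b \<longleftrightarrow> (\<forall>k. null k)"
    unfolding steers_to_zero_def is_solution_iff_modes null_def
    by (rule null_at_iff_componentwise[OF mode_solvable[OF g]])
  also have "\<dots> \<longleftrightarrow> (\<forall>k. k \<noteq> 0 \<longrightarrow> null k) \<and> null 0"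
    by metis
  also have "\<dots> \<longleftrightarrow> moment_conditions T f g a b"
    unfolding moment_conditions_def null_def b0 mode_zero_null_iff_moment[OF g T]
    using mode_null_iff_moment[OF g T] by (simp cong: imp_cong)
  finally show ?thesis .
qed

theorem lemma4p1:
  fixes T :: real
  assumes "T > 0"
  shows
   "(\<forall>a b. dual_Hper 2 a \<and> dual_Hper 1 b \<and> b 0 = 0 \<longrightarrow>
       (\<exists>f g. L2_on {0<..<2*pi} f \<and> L2_on {0<..<T} g \<and>
          (\<forall>U V. is_solution T f g a b U V \<longrightarrow> U T = (\<lambda>k. 0) \<and> V T = (\<lambda>k. 0))))
    \<longleftrightarrow>
    (\<forall>a b. dual_Hper 2 a \<and> dual_Hper 1 b \<and> b 0 = 0 \<longrightarrow>
       (\<exists>f g. L2_on {0<..<2*pi} f \<and> L2_on {0<..<T} g \<and>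
          (\<forall>k sg. k \<noteq> 0 \<longrightarrow>
             fcoeff f k * (LINT t:{-T/2..T/2}|lborel.
                 exp (- cnj (lam sg k) * of_real t) * g (t + T/2))
             = - exp (cnj (lam sg k) * of_real (T/2)) * gam a b sg k) \<and>
          fcoeff f 0 * (LINT t:{-T/2..T/2}|lborel. g (t + T/2)) = - a 0))"
proof -
  have "steers_to_zero T f g a b \<longleftrightarrow> moment_conditions T f g a b"
    if "b 0 = 0" "L2_on {0<..<T} g" for a b f g
    using steers_to_zero_iff_moment_conditions L2_on_imp_set_integrable assms that by simp
  then show ?thesis
    unfolding steers_to_zero_def[symmetric] moment_conditions_def[symmetric] by blast
qed

end
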